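(* Let $\phi_1,\dots,\phi_n:\mathbb{R}^d\to\mathbb{R}$ be differentiable and let $P(w)=\frac1n\sum_{i=1}^n\phi_i(w)$. Suppose $P$ is $H$-strongly convex with $H>0$ and $(1/\gamma)$-smooth, and let $w^*$ be a minimizer of $P$. Run the stratified-sampling minibatch SGD algorithm described in the context with constant step size $\eta_t=\eta\in\big(0,\frac{2}{H+1/\gamma}\big]$. Let $\alpha(\eta)=1-\frac{2\eta H/\gamma}{H+1/\gamma}$. Then $\alpha(\eta)\in\big[\big(\frac{H-1/\gamma}{H+1/\gamma}\big)^2,1\big)$, and for every $T\ge1$, $$\mathbb{E}P(w_{T+1})-P(w^* )\le\frac{\alpha(\eta)^T}{2\gamma}\|w^*\|^2+\frac{\eta^2}{2\gamma}\sum_{t=1}^T\alpha(\eta)^{T-t}\,\mathbb{E}V_t,$$ where $V_t$ is the variance of the stochastic gradient $g_t$ defined in the context.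
   Context: $\|\cdot\|$ denotes the Euclidean norm. A differentiable $\phi:\mathbb{R}^d\to\mathbb{R}$ is $H$-strongly convex ($H\ge0$) if $\phi(u)\ge\phi(v)+\nabla\phi(v)^\top(u-v)+\frac H2\|u-v\|^2$ for all $u,v$, and $(1/\gamma)$-smooth ($\gamma>0$) if $\phi(u)\le\phi(v)+\nabla\phi(v)^\top(u-v)+\frac1{2\gamma}\|u-v\|^2$ for all $u,v$. Algorithm (SGD with stratified sampling): start with $w_1=0$. At each step $t=1,2,\dots$, a partition of $[n]=\{1,\dots,n\}$ into nonempty disjoint sets $C_1^t,\dots,C_k^t$ with $|C_i^t|=n_i^t$, and positive integers $b_1^t,\dots,b_k^t$, are chosen (possibly depending on the past, but before the step-$t$ sampling). Then, independently across $i$ and of the past given these choices, for each $i$ a multiset $B_i^t$ of $b_i^t$ indices is drawn i.i.d. uniformly (with replacement) from $C_i^t$. Set $g_t=\frac1n\sum_{i=1}^k\frac{n_i^t}{b_i^t}\sum_{s\in B_i^t}\nabla\phi_s(w_t)$ and $w_{t+1}=w_t-\eta_t g_t$. The variance is $V_t=\mathbb{E}\big[\|g_t-\nabla P(w_t)\|^2\,\big|\,\text{past}\big]$ (note $\mathbb{E}[g_t\mid\text{past}]=\nabla P(w_t)$). *)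

theory Defs
  imports "HOL-Probability.Probability"
begin

text \<open>Component functions are indexed by 0..n-1 (i.e. the set {..<n}) instead of 1..n.\<close>

definition avg :: "nat \<Rightarrow> (nat \<Rightarrow> 'b \<Rightarrow> 'c::real_vector) \<Rightarrow> 'b \<Rightarrow> 'c" where
  "avg n f w = (1 / real n) *\<^sub>R (\<Sum>i<n. f i w)"

definition strongly_convex_grad :: "real \<Rightarrow> ('a::real_inner \<Rightarrow> real) \<Rightarrow> ('a \<Rightarrow> 'a) \<Rightarrow> bool" where
  "strongly_convex_grad H f f' \<longleftrightarrow>
     (\<forall>u v. f u \<ge> f v + f' v \<bullet> (u - v) + H / 2 * (norm (u - v))\<^sup>2)"

definition smooth_grad :: "real \<Rightarrow> ('a::real_inner \<Rightarrow> real) \<Rightarrow> ('a \<Rightarrow> 'a) \<Rightarrow> bool" where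
  "smooth_grad \<gamma> f f' \<longleftrightarrow>
     (\<forall>u v. f u \<le> f v + f' v \<bullet> (u - v) + 1 / (2 * \<gamma>) * (norm (u - v))\<^sup>2)"

text \<open>A choice at a step: a list of clusters C_1..C_k and batch sizes b_1..b_k.\<close>
type_synonym choice = "nat set list \<times> nat list"

definition valid_choice :: "nat \<Rightarrow> choice \<Rightarrow> bool" where
  "valid_choice n c \<longleftrightarrow>
     (let Cs = fst c; bs = snd c in
        length Cs = length bs \<and> length Cs \<ge> 1 \<and>
        (\<forall>i<length Cs. Cs ! i \<noteq> {}) \<and>
        (\<forall>i<length Cs. \<forall>j<length Cs. i \<noteq> j \<longrightarrow> Cs ! i \<inter> Cs ! j = {}) \<and>
        (\<Union>i<length Cs. Cs ! i) = {..<n} \<and>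
        (\<forall>i<length bs. bs ! i > 0))"

fun iid_pmf :: "nat \<Rightarrow> 'a pmf \<Rightarrow> 'a list pmf" where
  "iid_pmf 0 p = return_pmf []"
| "iid_pmf (Suc b) p = bind_pmf p (\<lambda>x. map_pmf (Cons x) (iid_pmf b p))"

fun seq_pmf :: "'a pmf list \<Rightarrow> 'a list pmf" where
  "seq_pmf [] = return_pmf []"
| "seq_pmf (p # ps) = bind_pmf p (\<lambda>x. map_pmf (Cons x) (seq_pmf ps))"

definition sample_pmf :: "choice \<Rightarrow> nat list list pmf" where
  "sample_pmf c = seq_pmf (map2 (\<lambda>C b. iid_pmf b (pmf_of_set C)) (fst c) (snd c))"

definition stoch_grad :: "nat \<Rightarrow> (nat \<Rightarrow> 'a \<Rightarrow> 'a::real_vector) \<Rightarrow> 'a \<Rightarrow> choice \<Rightarrow> nat list list \<Rightarrow> 'a" where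
  "stoch_grad n grad w c B = (1 / real n) *\<^sub>R
     (\<Sum>i<length (fst c). (real (card (fst c ! i)) / real (snd c ! i)) *\<^sub>R
        sum_list (map (\<lambda>s. grad s w) (B ! i)))"

text \<open>Histories are lists of past step samples, most recent first. The choice at a step is a
  (deterministic) function pol of the history; w_hist h is the current iterate
  (w_{t} for a history of length t-1).\<close>
fun w_hist :: "nat \<Rightarrow> (nat \<Rightarrow> 'a \<Rightarrow> 'a::real_vector) \<Rightarrow> (nat list list list \<Rightarrow> choice) \<Rightarrow> real
               \<Rightarrow> nat list list list \<Rightarrow> 'a" where
  "w_hist n grad pol \<eta> [] = 0"
| "w_hist n grad pol \<eta> (B # h) =
     w_hist n grad pol \<eta> h - \<eta> *\<^sub>R stoch_grad n grad (w_hist n grad pol \<eta> h) (pol h) B"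

fun hist_pmf :: "(nat list list list \<Rightarrow> choice) \<Rightarrow> nat \<Rightarrow> nat list list list pmf" where
  "hist_pmf pol 0 = return_pmf []"
| "hist_pmf pol (Suc t) = bind_pmf (hist_pmf pol t) (\<lambda>h. map_pmf (\<lambda>B. B # h) (sample_pmf (pol h)))"

definition cond_var :: "nat \<Rightarrow> (nat \<Rightarrow> 'a \<Rightarrow> 'a::real_inner) \<Rightarrow> (nat list list list \<Rightarrow> choice) \<Rightarrow> real
                        \<Rightarrow> nat list list list \<Rightarrow> real" where
  "cond_var n grad pol \<eta> h =
     measure_pmf.expectation (sample_pmf (pol h))
       (\<lambda>B. (norm (stoch_grad n grad (w_hist n grad pol \<eta> h) (pol h) B
                   - avg n grad (w_hist n grad pol \<eta> h)))\<^sup>2)"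

end

theory Submission
  imports Defs
begin

text \<open>
  The stratified minibatch gradient is unbiased, so conditionally on the past the squared
  distance to the minimizer splits into the squared distance after an exact gradient step plus
  \<open>\<eta>\<^sup>2 V\<^sub>t\<close>. For an \<open>H\<close>-strongly convex, \<open>(1/\<gamma>)\<close>-smooth \<open>P\<close> the gradient is co-coercive,
  \<open>\<parallel>\<nabla>P(u) - \<nabla>P(v)\<parallel>\<^sup>2 + (H/\<gamma>)\<parallel>u - v\<parallel>\<^sup>2 \<le> (H + 1/\<gamma>)\<langle>\<nabla>P(u) - \<nabla>P(v), u - v\<rangle>\<close>,
  which makes the exact gradient step a contraction of the squared distance by \<open>\<alpha>(\<eta>)\<close>.
  Unrolling the recursion \<open>E\<parallel>w\<^sub>t\<^sub>+\<^sub>1 - w\<^sup>*\<parallel>\<^sup>2 \<le> \<alpha> E\<parallel>w\<^sub>t - w\<^sup>*\<parallel>\<^sup>2 + \<eta>\<^sup>2 E V\<^sub>t\<close> from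
  \<open>w\<^sub>1 = 0\<close> and using \<open>P(w) - P(w\<^sup>*) \<le> \<parallel>w - w\<^sup>*\<parallel>\<^sup>2/(2\<gamma>)\<close> gives the bound.
\<close>

section \<open>Strongly convex smooth functions\<close>

lemma norm_diff_power2:
  fixes u v :: "'a::real_inner"
  shows "(norm (u - v))\<^sup>2 = (norm u)\<^sup>2 - 2 * (u \<bullet> v) + (norm v)\<^sup>2"
  by (simp add: power2_norm_eq_inner inner_diff_left inner_diff_right inner_commute)

lemma norm_diff_scaleR_power2:
  fixes a b :: "'a::real_inner"
  shows "(norm (a - c *\<^sub>R b))\<^sup>2 = (norm a)\<^sup>2 - 2 * c * (a \<bullet> b) + c\<^sup>2 * (norm b)\<^sup>2"
  by (simp add: norm_diff_power2 power_mult_distrib)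

lemma smooth_grad_minimizer_imp_grad_zero:
  fixes f :: "'a::real_inner \<Rightarrow> real"
  assumes sm: "smooth_grad \<gamma> f f'" and \<gamma>: "\<gamma> > 0" and min: "\<And>u. f ws \<le> f u"
  shows "f' ws = 0"
proof -
  let ?g = "f' ws"
  have "f (ws - \<gamma> *\<^sub>R ?g) \<le> f ws + ?g \<bullet> (ws - \<gamma> *\<^sub>R ?g - ws)
                                + 1 / (2 * \<gamma>) * (norm (ws - \<gamma> *\<^sub>R ?g - ws))\<^sup>2"
    using sm unfolding smooth_grad_def by blast
  also have "\<dots> = f ws - \<gamma> / 2 * (norm ?g)\<^sup>2"
    using \<gamma> by (simp add: dot_square_norm power_mult_distrib power2_eq_square field_simps)
  finally have "\<gamma> / 2 * (norm ?g)\<^sup>2 \<le> 0"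
    using min[of "ws - \<gamma> *\<^sub>R ?g"] by linarith
  with \<gamma> show ?thesis
    by (simp add: mult_le_0_iff)
qed

lemma smooth_grad_stationary_gap:
  fixes f :: "'a::real_inner \<Rightarrow> real"
  assumes "smooth_grad \<gamma> f f'" and "f' ws = 0"
  shows "f w - f ws \<le> 1 / (2 * \<gamma>) * (norm (w - ws))\<^sup>2"
  using assms unfolding smooth_grad_def by (smt (verit) inner_zero_left)

lemma strongly_convex_grad_shift:
  fixes f :: "'a::real_inner \<Rightarrow> real"
  assumes "strongly_convex_grad \<mu> f f'"
  shows "f u - \<mu> / 2 * (norm u)\<^sup>2
           \<ge> f v - \<mu> / 2 * (norm v)\<^sup>2 + (f' v - \<mu> *\<^sub>R v) \<bullet> (u - v)"
proof -
  have "f u \<ge> f v + f' v \<bullet> (u - v) + \<mu> / 2 * (norm (u - v))\<^sup>2"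
    using assms unfolding strongly_convex_grad_def by blast
  moreover have "(f' v - \<mu> *\<^sub>R v) \<bullet> (u - v) = f' v \<bullet> (u - v) - \<mu> * (v \<bullet> (u - v))"
    by (simp add: inner_diff_left)
  ultimately show ?thesis
    unfolding norm_diff_power2[of u v]
    by (simp add: inner_diff_right inner_commute dot_square_norm algebra_simps)
qed

lemma smooth_grad_shift:
  fixes f :: "'a::real_inner \<Rightarrow> real"
  assumes "smooth_grad \<gamma> f f'"
  shows "f u - \<mu> / 2 * (norm u)\<^sup>2
           \<le> f v - \<mu> / 2 * (norm v)\<^sup>2 + (f' v - \<mu> *\<^sub>R v) \<bullet> (u - v)
              + (1 / \<gamma> - \<mu>) / 2 * (norm (u - v))\<^sup>2"
proof -
  have "f u \<le> f v + f' v \<bullet> (u - v) + 1 / (2 * \<gamma>) * (norm (u - v))\<^sup>2"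
    using assms unfolding smooth_grad_def by blast
  moreover have "(f' v - \<mu> *\<^sub>R v) \<bullet> (u - v) = f' v \<bullet> (u - v) - \<mu> * (v \<bullet> (u - v))"
    by (simp add: inner_diff_left)
  moreover have "(1 / \<gamma> - \<mu>) / 2 * (norm (u - v))\<^sup>2
      = 1 / (2 * \<gamma>) * (norm (u - v))\<^sup>2 - \<mu> / 2 * (norm (u - v))\<^sup>2"
    by (simp add: field_simps)
  ultimately show ?thesis
    unfolding norm_diff_power2[of u v]
    by (simp add: inner_diff_right inner_commute dot_square_norm algebra_simps)
qed

lemma convex_smooth_grad_inner_ge:
  fixes g :: "'a::real_inner \<Rightarrow> real"
  assumes cv: "\<And>u v. g u \<ge> g v + g' v \<bullet> (u - v)"
    and sm: "\<And>u v. g u \<le> g v + g' v \<bullet> (u - v) + K / 2 * (norm (u - v))\<^sup>2"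
    and "r \<ge> 0"
  shows "(2 * r - K * r\<^sup>2) * (norm (g' y - g' x))\<^sup>2 \<le> (g' y - g' x) \<bullet> (y - x)"
proof -
  define e where "e = g' y - g' x"
  have "g (y - r *\<^sub>R e) \<ge> g x + g' x \<bullet> (y - r *\<^sub>R e - x)"
    and "g (y - r *\<^sub>R e) \<le> g y + g' y \<bullet> (y - r *\<^sub>R e - y) + K / 2 * (norm (y - r *\<^sub>R e - y))\<^sup>2"
    and "g (x + r *\<^sub>R e) \<ge> g y + g' y \<bullet> (x + r *\<^sub>R e - y)"
    and "g (x + r *\<^sub>R e) \<le> g x + g' x \<bullet> (x + r *\<^sub>R e - x) + K / 2 * (norm (x + r *\<^sub>R e - x))\<^sup>2"
    by (fact cv sm)+
  moreover have "(norm (y - r *\<^sub>R e - y))\<^sup>2 = r\<^sup>2 * (norm e)\<^sup>2"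
    and "(norm (x + r *\<^sub>R e - x))\<^sup>2 = r\<^sup>2 * (norm e)\<^sup>2"
    by (simp_all add: power_mult_distrib)
  moreover have "g' x \<bullet> (y - r *\<^sub>R e - x) + g' y \<bullet> (x + r *\<^sub>R e - y)
      - g' y \<bullet> (y - r *\<^sub>R e - y) - g' x \<bullet> (x + r *\<^sub>R e - x) = 2 * r * (norm e)\<^sup>2 - e \<bullet> (y - x)"
    unfolding e_def power2_norm_eq_inner
    by (simp add: inner_diff_left inner_diff_right inner_add_left inner_add_right algebra_simps)
  ultimately have "2 * r * (norm e)\<^sup>2 - e \<bullet> (y - x) \<le> K * r\<^sup>2 * (norm e)\<^sup>2"
    by (simp add: algebra_simps)
  then show ?thesis
    unfolding e_def by (simp add: algebra_simps)
qed

text \<open>No sign condition on \<open>K\<close>: for \<open>K \<le> 0\<close> the gradient is constant, and the shifted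
  function of the next lemma has \<open>K = 1/\<gamma> - \<mu>\<close>, which may be nonpositive.\<close>

lemma convex_smooth_grad_coercive:
  fixes g :: "'a::real_inner \<Rightarrow> real"
  assumes cv: "\<And>u v. g u \<ge> g v + g' v \<bullet> (u - v)"
    and sm: "\<And>u v. g u \<le> g v + g' v \<bullet> (u - v) + K / 2 * (norm (u - v))\<^sup>2"
  shows "(norm (g' y - g' x))\<^sup>2 \<le> K * ((g' y - g' x) \<bullet> (y - x))"
proof -
  define e where "e = g' y - g' x"
  have bound: "(2 * r - K * r\<^sup>2) * (norm e)\<^sup>2 \<le> e \<bullet> (y - x)" if "r \<ge> 0" for r
    unfolding e_def using cv sm that by (rule convex_smooth_grad_inner_ge)
  show ?thesis
  proof (cases "K > 0")
    case True
    have "2 * (1 / K) - K * (1 / K)\<^sup>2 = 1 / K"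
      using True by (simp add: power2_eq_square field_simps)
    then have "(norm e)\<^sup>2 / K \<le> e \<bullet> (y - x)"
      using bound[of "1 / K"] True by simp
    then show ?thesis
      unfolding e_def using True by (simp add: field_simps)
  next
    case False
    have "e = 0"
    proof (rule ccontr)
      assume "e \<noteq> 0"
      then have pos: "(norm e)\<^sup>2 > 0" by simp
      define r where "r = (\<bar>e \<bullet> (y - x)\<bar> + 1) / (norm e)\<^sup>2"
      have "r \<ge> 0" unfolding r_def using pos by simp
      have "2 * r * (norm e)\<^sup>2 \<le> (2 * r - K * r\<^sup>2) * (norm e)\<^sup>2"
        using False \<open>r \<ge> 0\<close> by (intro mult_right_mono) (auto simp: mult_nonpos_nonneg)
      with bound[OF \<open>r \<ge> 0\<close>] have "2 * (\<bar>e \<bullet> (y - x)\<bar> + 1) \<le> e \<bullet> (y - x)"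
        unfolding r_def using pos by simp
      then show False
        by (smt (verit) abs_ge_self)
    qed
    then show ?thesis
      unfolding e_def by simp
  qed
qed

lemma strongly_convex_smooth_grad_coercive:
  fixes f :: "'a::real_inner \<Rightarrow> real"
  assumes sc: "strongly_convex_grad \<mu> f f'" and sm: "smooth_grad \<gamma> f f'"
  shows "(norm (f' y - f' x))\<^sup>2 + \<mu> / \<gamma> * (norm (y - x))\<^sup>2
           \<le> (\<mu> + 1 / \<gamma>) * ((f' y - f' x) \<bullet> (y - x))"
proof -
  define d where "d = f' y - f' x"
  have shifted: "f' y - \<mu> *\<^sub>R y - (f' x - \<mu> *\<^sub>R x) = d - \<mu> *\<^sub>R (y - x)"
    unfolding d_def by (simp add: algebra_simps)
  \<comment> \<open>\<open>f - \<mu>/2 \<parallel>\<cdot>\<parallel>\<^sup>2\<close> is convex and \<open>(1/\<gamma> - \<mu>)\<close>-smooth.\<close>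
  have "(norm (d - \<mu> *\<^sub>R (y - x)))\<^sup>2 \<le> (1 / \<gamma> - \<mu>) * ((d - \<mu> *\<^sub>R (y - x)) \<bullet> (y - x))"
    unfolding shifted[symmetric]
    by (rule convex_smooth_grad_coercive[where g = "\<lambda>u. f u - \<mu> / 2 * (norm u)\<^sup>2"])
      (use strongly_convex_grad_shift[OF sc] smooth_grad_shift[OF sm] in auto)
  moreover have "(d - \<mu> *\<^sub>R (y - x)) \<bullet> (y - x) = d \<bullet> (y - x) - \<mu> * (norm (y - x))\<^sup>2"
    by (simp add: inner_diff_left dot_square_norm)
  ultimately have "(norm d)\<^sup>2 - 2 * \<mu> * (d \<bullet> (y - x)) + \<mu>\<^sup>2 * (norm (y - x))\<^sup>2
      \<le> (1 / \<gamma> - \<mu>) * (d \<bullet> (y - x) - \<mu> * (norm (y - x))\<^sup>2)"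
    by (simp only: norm_diff_scaleR_power2)
  then show ?thesis
    unfolding d_def[symmetric] by (simp add: algebra_simps power2_eq_square)
qed

lemma gradient_step_contraction:
  fixes f :: "'a::real_inner \<Rightarrow> real"
  assumes sc: "strongly_convex_grad \<mu> f f'" and sm: "smooth_grad \<gamma> f f'"
    and \<gamma>: "\<gamma> > 0" and \<mu>: "\<mu> > 0" and stationary: "f' ws = 0"
    and \<eta>: "0 < \<eta>" "\<eta> \<le> 2 / (\<mu> + 1 / \<gamma>)"
  shows "(norm (w - ws - \<eta> *\<^sub>R f' w))\<^sup>2
           \<le> (1 - (2 * \<eta> * \<mu> / \<gamma>) / (\<mu> + 1 / \<gamma>)) * (norm (w - ws))\<^sup>2"
proof -
  define L where "L = 1 / \<gamma>"
  define a where "a = f' w \<bullet> (w - ws)"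
  define b where "b = (norm (w - ws))\<^sup>2"
  define c where "c = (norm (f' w))\<^sup>2"
  have L: "L > 0"
    using \<gamma> unfolding L_def by simp
  then have sum_pos: "\<mu> + L > 0"
    using \<mu> by simp
  have coercive: "c + \<mu> * L * b \<le> (\<mu> + L) * a"
    using strongly_convex_smooth_grad_coercive[OF sc sm, of w ws]
    unfolding a_def b_def c_def L_def stationary by simp
  have step_small: "\<eta> * (\<mu> + L) \<le> 2"
    using \<eta> sum_pos unfolding L_def by (simp add: field_simps)
  have "(\<mu> + L) * (b - 2 * \<eta> * a + \<eta>\<^sup>2 * c)
          = (\<mu> + L) * b - 2 * \<eta> * ((\<mu> + L) * a) + \<eta>\<^sup>2 * (\<mu> + L) * c"
    by (simp add: algebra_simps)
  also have "\<dots> \<le> (\<mu> + L) * b - 2 * \<eta> * (c + \<mu> * L * b) + \<eta>\<^sup>2 * (\<mu> + L) * c"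
    using coercive \<eta> by simp
  also have "\<dots> = (\<mu> + L) * b - 2 * \<eta> * \<mu> * L * b - \<eta> * c * (2 - \<eta> * (\<mu> + L))"
    by (simp add: algebra_simps power2_eq_square)
  also have "\<dots> \<le> (\<mu> + L) * b - 2 * \<eta> * \<mu> * L * b"
    using \<eta> step_small by (simp add: c_def)
  also have "\<dots> = (\<mu> + L) * ((1 - 2 * \<eta> * \<mu> * L / (\<mu> + L)) * b)"
    using sum_pos by (simp add: field_simps)
  finally have "b - 2 * \<eta> * a + \<eta>\<^sup>2 * c \<le> (1 - 2 * \<eta> * \<mu> * L / (\<mu> + L)) * b"
    using sum_pos by simp
  then show ?thesis
    unfolding a_def b_def c_def L_def by (simp add: norm_diff_scaleR_power2 inner_commute)
qed

lemma step_factor_bounds: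
  fixes H \<gamma> \<eta> :: real
  assumes H: "H > 0" and \<gamma>: "\<gamma> > 0" and \<eta>: "0 < \<eta>" "\<eta> \<le> 2 / (H + 1 / \<gamma>)"
  shows "((H - 1 / \<gamma>) / (H + 1 / \<gamma>))\<^sup>2 \<le> 1 - (2 * \<eta> * H / \<gamma>) / (H + 1 / \<gamma>)"
    and "1 - (2 * \<eta> * H / \<gamma>) / (H + 1 / \<gamma>) < 1"
proof -
  define L where "L = 1 / \<gamma>"
  have L: "L > 0"
    using \<gamma> unfolding L_def by simp
  then have sum_pos: "H + L > 0"
    using H by simp
  have factor: "(2 * \<eta> * H / \<gamma>) / (H + 1 / \<gamma>) = 2 * \<eta> * H * L / (H + L)"
    unfolding L_def by simp
  have step_small: "\<eta> * (H + L) \<le> 2"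
    using \<eta> sum_pos unfolding L_def by (simp add: field_simps)
  show "1 - (2 * \<eta> * H / \<gamma>) / (H + 1 / \<gamma>) < 1"
    unfolding factor using H L \<eta> sum_pos by simp
  have "(1 - 2 * \<eta> * H * L / (H + L)) - ((H - L) / (H + L))\<^sup>2
          = ((H + L)\<^sup>2 - 2 * \<eta> * H * L * (H + L) - (H - L)\<^sup>2) / (H + L)\<^sup>2"
  proof -
    have "((H - L) / (H + L))\<^sup>2 = (H - L)\<^sup>2 / (H + L)\<^sup>2"
      by (simp add: power_divide)
    moreover have "2 * \<eta> * H * L / (H + L) = 2 * \<eta> * H * L * (H + L) / (H + L)\<^sup>2"
      and "(1::real) = (H + L)\<^sup>2 / (H + L)\<^sup>2"
      using sum_pos by (simp_all add: power2_eq_square)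
    ultimately show ?thesis
      by (metis diff_divide_distrib)
  qed
  also have "\<dots> = 2 * H * L * (2 - \<eta> * (H + L)) / (H + L)\<^sup>2"
    by (simp add: algebra_simps power2_eq_square)
  finally have "(1 - 2 * \<eta> * H * L / (H + L)) - ((H - L) / (H + L))\<^sup>2
          = 2 * H * L * (2 - \<eta> * (H + L)) / (H + L)\<^sup>2" .
  moreover have "2 * H * L * (2 - \<eta> * (H + L)) / (H + L)\<^sup>2 \<ge> 0"
    using H L step_small by simp
  ultimately have "((H - L) / (H + L))\<^sup>2 \<le> 1 - 2 * \<eta> * H * L / (H + L)"
    by linarith
  then show "((H - 1 / \<gamma>) / (H + 1 / \<gamma>))\<^sup>2 \<le> 1 - (2 * \<eta> * H / \<gamma>) / (H + 1 / \<gamma>)"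
    unfolding factor by (simp add: L_def)
qed

section \<open>Finitely supported sampling distributions\<close>

lemma finite_set_iid_pmf: "finite (set_pmf p) \<Longrightarrow> finite (set_pmf (iid_pmf b p))"
  by (induction b) auto

lemma finite_set_seq_pmf:
  "(\<And>p. p \<in> set ps \<Longrightarrow> finite (set_pmf p)) \<Longrightarrow> finite (set_pmf (seq_pmf ps))"
  by (induction ps) auto

lemma valid_choiceD:
  assumes "valid_choice n c"
  shows "length (fst c) = length (snd c)"
    and "\<And>i. i < length (fst c) \<Longrightarrow> fst c ! i \<noteq> {}"
    and "\<And>i j. i < length (fst c) \<Longrightarrow> j < length (fst c) \<Longrightarrow> i \<noteq> j \<Longrightarrow> fst c ! i \<inter> fst c ! j = {}"
    and "(\<Union>i<length (fst c). fst c ! i) = {..<n}"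
    and "\<And>i. i < length (snd c) \<Longrightarrow> snd c ! i > 0"
    and "\<And>i. i < length (fst c) \<Longrightarrow> finite (fst c ! i)"
proof -
  show "length (fst c) = length (snd c)"
    and "\<And>i. i < length (fst c) \<Longrightarrow> fst c ! i \<noteq> {}"
    and "\<And>i j. i < length (fst c) \<Longrightarrow> j < length (fst c) \<Longrightarrow> i \<noteq> j \<Longrightarrow> fst c ! i \<inter> fst c ! j = {}"
    and cover: "(\<Union>i<length (fst c). fst c ! i) = {..<n}"
    and "\<And>i. i < length (snd c) \<Longrightarrow> snd c ! i > 0"
    using assms unfolding valid_choice_def Let_def by auto
  fix i assume "i < length (fst c)"
  then have "fst c ! i \<subseteq> {..<n}"
    using cover by blast
  then show "finite (fst c ! i)"
    using finite_subset by blast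
qed

lemma finite_set_sample_pmf:
  assumes "valid_choice n c"
  shows "finite (set_pmf (sample_pmf c))"
  unfolding sample_pmf_def
proof (rule finite_set_seq_pmf)
  fix p assume "p \<in> set (map2 (\<lambda>C b. iid_pmf b (pmf_of_set C)) (fst c) (snd c))"
  then obtain i where i: "i < length (fst c)" "i < length (snd c)"
    and p: "p = iid_pmf (snd c ! i) (pmf_of_set (fst c ! i))"
    by (auto simp: in_set_conv_nth)
  show "finite (set_pmf p)"
    unfolding p using valid_choiceD[OF assms] i by (intro finite_set_iid_pmf) simp
qed

lemma finite_set_hist_pmf:
  assumes "\<And>h. finite (set_pmf (sample_pmf (pol h)))"
  shows "finite (set_pmf (hist_pmf pol t))"
  by (induction t) (auto simp: assms)

lemma integral_bind_pmf_finite: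
  fixes f :: "'b \<Rightarrow> 'c::{banach, second_countable_topology}"
  assumes M: "finite (set_pmf M)" and N: "\<And>x. x \<in> set_pmf M \<Longrightarrow> finite (set_pmf (N x))"
  shows "measure_pmf.expectation (bind_pmf M N) f
           = measure_pmf.expectation M (\<lambda>x. measure_pmf.expectation (N x) f)"
proof -
  define S where "S = set_pmf (bind_pmf M N)"
  have S: "finite S"
    unfolding S_def using M N by auto
  have N_S: "measure_pmf.expectation (N x) f = (\<Sum>y\<in>S. pmf (N x) y *\<^sub>R f y)"
    if "x \<in> set_pmf M" for x
    by (rule integral_measure_pmf[OF S]) (use that in \<open>auto simp: S_def\<close>)
  have "measure_pmf.expectation (bind_pmf M N) f = (\<Sum>y\<in>S. pmf (bind_pmf M N) y *\<^sub>R f y)"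
    by (rule integral_measure_pmf[OF S]) (auto simp: S_def)
  also have "\<dots> = (\<Sum>y\<in>S. (\<Sum>x\<in>set_pmf M. pmf M x * pmf (N x) y) *\<^sub>R f y)"
    by (intro sum.cong refl) (simp add: pmf_bind integral_measure_pmf[OF M])
  also have "\<dots> = (\<Sum>x\<in>set_pmf M. pmf M x *\<^sub>R (\<Sum>y\<in>S. pmf (N x) y *\<^sub>R f y))"
    by (simp add: scaleR_sum_left scaleR_sum_right sum.swap[of _ S])
  also have "\<dots> = (\<Sum>x\<in>set_pmf M. pmf M x *\<^sub>R measure_pmf.expectation (N x) f)"
    by (intro sum.cong refl) (simp add: N_S)
  also have "\<dots> = measure_pmf.expectation M (\<lambda>x. measure_pmf.expectation (N x) f)"
    by (rule integral_measure_pmf[OF M, symmetric]) auto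
  finally show ?thesis .
qed

lemma integral_hist_pmf_Suc:
  fixes F :: "nat list list list \<Rightarrow> real"
  assumes "\<And>h. finite (set_pmf (sample_pmf (pol h)))"
  shows "measure_pmf.expectation (hist_pmf pol (Suc t)) F
           = measure_pmf.expectation (hist_pmf pol t)
               (\<lambda>h. measure_pmf.expectation (sample_pmf (pol h)) (\<lambda>B. F (B # h)))"
  by (simp add: integral_bind_pmf_finite finite_set_hist_pmf assms)

lemma map_nth_seq_pmf: "i < length ps \<Longrightarrow> map_pmf (\<lambda>B. B ! i) (seq_pmf ps) = ps ! i"
proof (induction ps arbitrary: i)
  case Nil
  then show ?case by simp
next
  case (Cons p ps)
  then show ?case
    by (cases i) (simp_all add: map_bind_pmf map_pmf_comp bind_return_pmf')
qed

lemma integral_iid_pmf_sum_list: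
  fixes G :: "'b \<Rightarrow> 'c::{banach, second_countable_topology}"
  assumes fin: "finite (set_pmf p)"
  shows "measure_pmf.expectation (iid_pmf b p) (\<lambda>L. sum_list (map G L))
           = real b *\<^sub>R measure_pmf.expectation p G"
proof (induction b)
  case 0
  then show ?case by simp
next
  case (Suc b)
  have int: "integrable (measure_pmf (iid_pmf b p)) g" for g :: "_ \<Rightarrow> 'c"
    by (rule integrable_measure_pmf_finite[OF finite_set_iid_pmf[OF fin]])
  have "measure_pmf.expectation (iid_pmf (Suc b) p) (\<lambda>L. sum_list (map G L))
          = measure_pmf.expectation p
              (\<lambda>x. measure_pmf.expectation (iid_pmf b p) (\<lambda>L. G x + sum_list (map G L)))"
    by (simp add: integral_bind_pmf_finite fin finite_set_iid_pmf)
  also have "\<dots> = measure_pmf.expectation p (\<lambda>x. G x + real b *\<^sub>R measure_pmf.expectation p G)"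
    using Suc by (simp add: Bochner_Integration.integral_add int measure_pmf.prob_space)
  also have "\<dots> = real (Suc b) *\<^sub>R measure_pmf.expectation p G"
    by (subst Bochner_Integration.integral_add)
      (auto simp: integrable_measure_pmf_finite fin algebra_simps)
  finally show ?case .
qed

lemma integral_pmf_of_set_vector:
  fixes G :: "'b \<Rightarrow> 'c::{banach, second_countable_topology}"
  assumes "finite C" "C \<noteq> {}"
  shows "measure_pmf.expectation (pmf_of_set C) G = (1 / real (card C)) *\<^sub>R (\<Sum>s\<in>C. G s)"
proof -
  have "measure_pmf.expectation (pmf_of_set C) G = (\<Sum>s\<in>C. pmf (pmf_of_set C) s *\<^sub>R G s)"
    by (rule integral_measure_pmf[OF assms(1)]) (use assms in auto)
  also have "\<dots> = (\<Sum>s\<in>C. (1 / real (card C)) *\<^sub>R G s)"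
    using assms by (intro sum.cong) auto
  finally show ?thesis
    by (simp add: scaleR_sum_right)
qed

section \<open>Stratified SGD\<close>

lemma integral_sample_pmf_cluster:
  fixes G :: "nat \<Rightarrow> 'c::{banach, second_countable_topology}"
  assumes c: "valid_choice n c" and i: "i < length (fst c)"
  shows "(real (card (fst c ! i)) / real (snd c ! i)) *\<^sub>R
           measure_pmf.expectation (sample_pmf c) (\<lambda>B. sum_list (map G (B ! i)))
         = (\<Sum>s\<in>fst c ! i. G s)"
proof -
  note V = valid_choiceD[OF c]
  have len: "i < length (map2 (\<lambda>C b. iid_pmf b (pmf_of_set C)) (fst c) (snd c))"
    using i V(1) by simp
  have marginal: "map_pmf (\<lambda>B. B ! i) (sample_pmf c) = iid_pmf (snd c ! i) (pmf_of_set (fst c ! i))"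
    unfolding sample_pmf_def using map_nth_seq_pmf[OF len] len by simp
  have b: "real (snd c ! i) > 0"
    using V(1) V(5)[of i] i by simp
  have card: "real (card (fst c ! i)) > 0"
    using V(2)[OF i] V(6)[OF i] by (simp add: card_gt_0_iff)
  have "measure_pmf.expectation (sample_pmf c) (\<lambda>B. sum_list (map G (B ! i)))
          = measure_pmf.expectation (map_pmf (\<lambda>B. B ! i) (sample_pmf c)) (\<lambda>L. sum_list (map G L))"
    by simp
  also have "\<dots> = real (snd c ! i) *\<^sub>R ((1 / real (card (fst c ! i))) *\<^sub>R (\<Sum>s\<in>fst c ! i. G s))"
    unfolding marginal using V(2)[OF i] V(6)[OF i]
    by (simp add: integral_iid_pmf_sum_list integral_pmf_of_set_vector)
  finally show ?thesis
    using b card by simp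
qed

lemma integral_stoch_grad:
  fixes grad :: "nat \<Rightarrow> 'a \<Rightarrow> 'a::{banach, second_countable_topology}"
  assumes c: "valid_choice n c"
  shows "measure_pmf.expectation (sample_pmf c) (stoch_grad n grad w c) = avg n grad w"
proof -
  note V = valid_choiceD[OF c]
  define k where "k = length (fst c)"
  have int: "integrable (measure_pmf (sample_pmf c)) f" for f :: "_ \<Rightarrow> 'a"
    by (rule integrable_measure_pmf_finite[OF finite_set_sample_pmf[OF c]])
  have "measure_pmf.expectation (sample_pmf c) (stoch_grad n grad w c)
     = (1 / real n) *\<^sub>R (\<Sum>i<k. (real (card (fst c ! i)) / real (snd c ! i)) *\<^sub>R
          measure_pmf.expectation (sample_pmf c) (\<lambda>B. sum_list (map (\<lambda>s. grad s w) (B ! i))))"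
    unfolding stoch_grad_def k_def by (simp add: integral_sum int)
  also have "\<dots> = (1 / real n) *\<^sub>R (\<Sum>i<k. \<Sum>s\<in>fst c ! i. grad s w)"
    unfolding k_def by (simp add: integral_sample_pmf_cluster[OF c])
  also have "(\<Sum>i<k. \<Sum>s\<in>fst c ! i. grad s w) = (\<Sum>s\<in>(\<Union>i<k. fst c ! i). grad s w)"
    by (rule sum.UNION_disjoint[symmetric]) (use V k_def in auto)
  also have "(\<Union>i<k. fst c ! i) = {..<n}"
    using V k_def by simp
  finally show ?thesis
    unfolding avg_def .
qed

lemma integral_norm_diff_scaleR_power2:
  fixes g :: "'b \<Rightarrow> 'a::{real_inner, banach, second_countable_topology}"
  assumes fin: "finite (set_pmf Q)" and mean: "measure_pmf.expectation Q g = m"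
  shows "measure_pmf.expectation Q (\<lambda>B. (norm (x - \<eta> *\<^sub>R g B))\<^sup>2)
           = (norm (x - \<eta> *\<^sub>R m))\<^sup>2 + \<eta>\<^sup>2 * measure_pmf.expectation Q (\<lambda>B. (norm (g B - m))\<^sup>2)"
proof -
  have int: "integrable (measure_pmf Q) f" for f :: "_ \<Rightarrow> 'c::{banach, second_countable_topology}"
    by (rule integrable_measure_pmf_finite[OF fin])
  have expand: "(norm (x - \<eta> *\<^sub>R g B))\<^sup>2 = (norm (x - \<eta> *\<^sub>R m))\<^sup>2
      - 2 * \<eta> * ((x - \<eta> *\<^sub>R m) \<bullet> (g B - m)) + \<eta>\<^sup>2 * (norm (g B - m))\<^sup>2" for B
  proof -
    have "x - \<eta> *\<^sub>R g B = (x - \<eta> *\<^sub>R m) - \<eta> *\<^sub>R (g B - m)"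
      by (simp add: algebra_simps)
    then show ?thesis
      by (simp only: norm_diff_scaleR_power2)
  qed
  have "measure_pmf.expectation Q (\<lambda>B. g B - m) = 0"
    using mean by (simp add: Bochner_Integration.integral_diff int measure_pmf.prob_space)
  then have cross: "measure_pmf.expectation Q (\<lambda>B. (x - \<eta> *\<^sub>R m) \<bullet> (g B - m)) = 0"
    by (simp add: integral_inner_right[OF int])
  show ?thesis
    unfolding expand
    by (simp add: Bochner_Integration.integral_diff Bochner_Integration.integral_add int cross)
qed

lemma expected_sgd_step_dist:
  fixes grad :: "nat \<Rightarrow> 'a \<Rightarrow> 'a::euclidean_space" and f :: "'a \<Rightarrow> real"
  assumes sc: "strongly_convex_grad H f (avg n grad)" and sm: "smooth_grad \<gamma> f (avg n grad)"
    and "\<gamma> > 0" "H > 0" "avg n grad ws = 0"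
    and "0 < \<eta>" "\<eta> \<le> 2 / (H + 1 / \<gamma>)"
    and c: "valid_choice n c"
  shows "measure_pmf.expectation (sample_pmf c)
           (\<lambda>B. (norm (w - \<eta> *\<^sub>R stoch_grad n grad w c B - ws))\<^sup>2)
         \<le> (1 - (2 * \<eta> * H / \<gamma>) / (H + 1 / \<gamma>)) * (norm (w - ws))\<^sup>2
            + \<eta>\<^sup>2 * measure_pmf.expectation (sample_pmf c)
                     (\<lambda>B. (norm (stoch_grad n grad w c B - avg n grad w))\<^sup>2)"
proof -
  have shift: "w - \<eta> *\<^sub>R stoch_grad n grad w c B - ws = (w - ws) - \<eta> *\<^sub>R stoch_grad n grad w c B"
    for B by (simp add: algebra_simps)
  have "measure_pmf.expectation (sample_pmf c)
           (\<lambda>B. (norm (w - \<eta> *\<^sub>R stoch_grad n grad w c B - ws))\<^sup>2)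
         = (norm (w - ws - \<eta> *\<^sub>R avg n grad w))\<^sup>2
            + \<eta>\<^sup>2 * measure_pmf.expectation (sample_pmf c)
                     (\<lambda>B. (norm (stoch_grad n grad w c B - avg n grad w))\<^sup>2)"
    unfolding shift
    by (rule integral_norm_diff_scaleR_power2[OF finite_set_sample_pmf[OF c] integral_stoch_grad[OF c]])
  then show ?thesis
    using gradient_step_contraction[OF sc sm assms(3-7), of w] by simp
qed

lemma integral_smooth_grad_stationary_gap:
  fixes f :: "'a::real_inner \<Rightarrow> real"
  assumes "smooth_grad \<gamma> f f'" "f' ws = 0" and fin: "finite (set_pmf M)"
  shows "measure_pmf.expectation M (\<lambda>x. f (X x)) - f ws
           \<le> 1 / (2 * \<gamma>) * measure_pmf.expectation M (\<lambda>x. (norm (X x - ws))\<^sup>2)"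
proof -
  have int: "integrable (measure_pmf M) g" for g :: "_ \<Rightarrow> real"
    by (rule integrable_measure_pmf_finite[OF fin])
  have "measure_pmf.expectation M (\<lambda>x. f (X x)) - f ws
          = measure_pmf.expectation M (\<lambda>x. f (X x) - f ws)"
    by (simp add: Bochner_Integration.integral_diff int measure_pmf.prob_space)
  also have "\<dots> \<le> measure_pmf.expectation M (\<lambda>x. 1 / (2 * \<gamma>) * (norm (X x - ws))\<^sup>2)"
    by (intro Bochner_Integration.integral_mono int) (rule smooth_grad_stationary_gap[OF assms(1,2)])
  finally show ?thesis
    by simp
qed

lemma linear_recurrence_bound:
  fixes R V :: "nat \<Rightarrow> real"
  assumes "\<alpha> \<ge> 0" and step: "\<And>t. R (Suc t) \<le> \<alpha> * R t + V t"
  shows "R T \<le> \<alpha> ^ T * R 0 + (\<Sum>t = 1..T. \<alpha> ^ (T - t) * V (t - 1))"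
proof (induction T)
  case 0
  then show ?case by simp
next
  case (Suc T)
  have "(\<Sum>t = 1..T. \<alpha> ^ (Suc T - t) * V (t - 1)) = \<alpha> * (\<Sum>t = 1..T. \<alpha> ^ (T - t) * V (t - 1))"
    by (simp add: sum_distrib_left Suc_diff_le mult.assoc)
  then have unfold: "(\<Sum>t = 1..Suc T. \<alpha> ^ (Suc T - t) * V (t - 1))
                     = \<alpha> * (\<Sum>t = 1..T. \<alpha> ^ (T - t) * V (t - 1)) + V T"
    by simp
  have "R (Suc T) \<le> \<alpha> * R T + V T"
    by (rule step)
  also have "\<dots> \<le> \<alpha> * (\<alpha> ^ T * R 0 + (\<Sum>t = 1..T. \<alpha> ^ (T - t) * V (t - 1))) + V T"
    using Suc \<open>\<alpha> \<ge> 0\<close> by (simp add: mult_left_mono)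
  also have "\<dots> = \<alpha> ^ Suc T * R 0 + (\<Sum>t = 1..Suc T. \<alpha> ^ (Suc T - t) * V (t - 1))"
    unfolding unfold by (simp add: algebra_simps)
  finally show ?case .
qed

lemma expected_sgd_dist_bound:
  fixes grad :: "nat \<Rightarrow> 'a \<Rightarrow> 'a::euclidean_space" and f :: "'a \<Rightarrow> real"
  assumes sc: "strongly_convex_grad H f (avg n grad)" and sm: "smooth_grad \<gamma> f (avg n grad)"
    and \<gamma>: "\<gamma> > 0" and H: "H > 0" and stationary: "avg n grad ws = 0"
    and \<eta>: "0 < \<eta>" "\<eta> \<le> 2 / (H + 1 / \<gamma>)"
    and pol: "\<And>h. valid_choice n (pol h)"
  defines "\<alpha> \<equiv> 1 - (2 * \<eta> * H / \<gamma>) / (H + 1 / \<gamma>)"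
  shows "measure_pmf.expectation (hist_pmf pol T) (\<lambda>h. (norm (w_hist n grad pol \<eta> h - ws))\<^sup>2)
           \<le> \<alpha> ^ T * (norm ws)\<^sup>2 + \<eta>\<^sup>2 * (\<Sum>t = 1..T. \<alpha> ^ (T - t) *
                 measure_pmf.expectation (hist_pmf pol (t - 1)) (cond_var n grad pol \<eta>))"
proof -
  define W where "W = w_hist n grad pol \<eta>"
  define R where "R t = measure_pmf.expectation (hist_pmf pol t) (\<lambda>h. (norm (W h - ws))\<^sup>2)" for t
  define V where "V t = measure_pmf.expectation (hist_pmf pol t) (cond_var n grad pol \<eta>)" for t
  have \<alpha>_nonneg: "\<alpha> \<ge> 0"
    using step_factor_bounds(1)[OF H \<gamma> \<eta>] unfolding \<alpha>_def by (meson order_trans zero_le_power2)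
  have fin: "finite (set_pmf (sample_pmf (pol h)))" for h
    by (rule finite_set_sample_pmf[OF pol])
  have int: "integrable (measure_pmf (hist_pmf pol t)) g" for t and g :: "_ \<Rightarrow> real"
    by (rule integrable_measure_pmf_finite) (rule finite_set_hist_pmf, rule fin)
  have "R (Suc t) \<le> \<alpha> * R t + \<eta>\<^sup>2 * V t" for t
  proof -
    have "R (Suc t) \<le> measure_pmf.expectation (hist_pmf pol t)
                        (\<lambda>h. \<alpha> * (norm (W h - ws))\<^sup>2 + \<eta>\<^sup>2 * cond_var n grad pol \<eta> h)"
      unfolding R_def integral_hist_pmf_Suc[OF fin]
      by (intro Bochner_Integration.integral_mono int)
        (simp only: W_def w_hist.simps \<alpha>_def cond_var_def,
         rule expected_sgd_step_dist[OF sc sm \<gamma> H stationary \<eta> pol])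
    then show ?thesis
      unfolding R_def V_def by (simp add: int)
  qed
  then show ?thesis
    using linear_recurrence_bound[of \<alpha> R "\<lambda>t. \<eta>\<^sup>2 * V t" T] \<alpha>_nonneg
    by (simp add: R_def V_def W_def sum_distrib_left mult.left_commute)
qed

theorem theorem2:
  fixes n :: nat and \<phi> :: "nat \<Rightarrow> 'a::euclidean_space \<Rightarrow> real" and grad :: "nat \<Rightarrow> 'a \<Rightarrow> 'a"
    and H \<gamma> \<eta> :: real and wstar :: 'a
    and pol :: "nat list list list \<Rightarrow> choice"
  assumes n_pos: "n > 0"
    and grad: "\<And>i w. i < n \<Longrightarrow> (\<phi> i has_derivative (\<lambda>v. grad i w \<bullet> v)) (at w)"
    and H_pos: "H > 0" and gamma_pos: "\<gamma> > 0"
    and sc: "strongly_convex_grad H (avg n \<phi>) (avg n grad)"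
    and sm: "smooth_grad \<gamma> (avg n \<phi>) (avg n grad)"
    and wstar: "\<And>w. avg n \<phi> wstar \<le> avg n \<phi> w"
    and eta: "0 < \<eta>" "\<eta> \<le> 2 / (H + 1 / \<gamma>)"
    and pol: "\<And>h. valid_choice n (pol h)"
  shows "(let \<alpha> = 1 - (2 * \<eta> * H / \<gamma>) / (H + 1 / \<gamma>) in
           ((H - 1 / \<gamma>) / (H + 1 / \<gamma>))\<^sup>2 \<le> \<alpha> \<and> \<alpha> < 1 \<and>
           (\<forall>T \<ge> 1.
              measure_pmf.expectation (hist_pmf pol T) (\<lambda>h. avg n \<phi> (w_hist n grad pol \<eta> h))
                - avg n \<phi> wstar
              \<le> \<alpha> ^ T / (2 * \<gamma>) * (norm wstar)\<^sup>2
                 + \<eta>\<^sup>2 / (2 * \<gamma>) * (\<Sum>t = 1..T. \<alpha> ^ (T - t) *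
                     measure_pmf.expectation (hist_pmf pol (t - 1)) (cond_var n grad pol \<eta>))))"
proof -
  define \<alpha> where "\<alpha> = 1 - (2 * \<eta> * H / \<gamma>) / (H + 1 / \<gamma>)"
  define V where "V t = measure_pmf.expectation (hist_pmf pol t) (cond_var n grad pol \<eta>)" for t
  have stationary: "avg n grad wstar = 0"
    by (rule smooth_grad_minimizer_imp_grad_zero[OF sm gamma_pos wstar])
  have fin_hist: "finite (set_pmf (hist_pmf pol T))" for T
    by (rule finite_set_hist_pmf, rule finite_set_sample_pmf[OF pol])
  have bound: "measure_pmf.expectation (hist_pmf pol T) (\<lambda>h. avg n \<phi> (w_hist n grad pol \<eta> h))
          - avg n \<phi> wstar
        \<le> \<alpha> ^ T / (2 * \<gamma>) * (norm wstar)\<^sup>2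
             + \<eta>\<^sup>2 / (2 * \<gamma>) * (\<Sum>t = 1..T. \<alpha> ^ (T - t) * V (t - 1))" for T
  proof -
    have "measure_pmf.expectation (hist_pmf pol T) (\<lambda>h. avg n \<phi> (w_hist n grad pol \<eta> h))
            - avg n \<phi> wstar
          \<le> 1 / (2 * \<gamma>) * measure_pmf.expectation (hist_pmf pol T)
                              (\<lambda>h. (norm (w_hist n grad pol \<eta> h - wstar))\<^sup>2)"
      by (rule integral_smooth_grad_stationary_gap[OF sm stationary fin_hist])
    also have "\<dots> \<le> 1 / (2 * \<gamma>) *
                 (\<alpha> ^ T * (norm wstar)\<^sup>2 + \<eta>\<^sup>2 * (\<Sum>t = 1..T. \<alpha> ^ (T - t) * V (t - 1)))"
      using expected_sgd_dist_bound[OF sc sm gamma_pos H_pos stationary eta pol] gamma_pos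
      unfolding \<alpha>_def V_def by (intro mult_left_mono) auto
    also have "\<dots> = \<alpha> ^ T / (2 * \<gamma>) * (norm wstar)\<^sup>2
                   + \<eta>\<^sup>2 / (2 * \<gamma>) * (\<Sum>t = 1..T. \<alpha> ^ (T - t) * V (t - 1))"
      by (simp add: add_divide_distrib field_simps)
    finally show ?thesis .
  qed
  show ?thesis
    using bound step_factor_bounds[OF H_pos gamma_pos eta]
    unfolding Let_def \<alpha>_def[symmetric] V_def by simp
qed

end
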